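(* Let $g\sim(a,b,\mu)$ be a Bernstein function and $r=r[g]$. For $t>0$ let $\mathcal C_t(z):=\frac{1-e^{-tz}}{tz}$. Then $\mathcal C_t\cdot g\in\mathcal W^+(\mathbb C_+)$ for each $t>0$ and \[\|\mathcal C_t\,g\|_{\mathcal W^+}=2r(t)\qquad(t>0).\]
   Context: A Bernstein function $g\sim(a,b,\mu)$ is $g(z)=a+bz+\int_{(0,\infty)}(1-e^{-sz})\mu(\mathrm ds)$ with $a,b\ge0$, $\mu$ positive Radon on $(0,\infty)$, $\int\frac{s}{1+s}\mu(\mathrm ds)<\infty$ (identified with its holomorphic extension to $\mathbb C_+=\{\operatorname{Re}z>0\}$). Its rate function is $r[g](t):=\frac a2+\frac bt+\int_{(0,\infty)}\min(s/t,1)\,\mu(\mathrm ds)$ for $t>0$. $\mathcal W^+(\mathbb C_+)$ is the Banach algebra of Laplace transforms $\hat\nu(z)=\int_{[0,\infty)}e^{-sz}\nu(\mathrm ds)$ of bounded complex Radon measures $\nu$ on $[0,\infty)$, with $\|\hat\nu\|_{\mathcal W^+}=|\nu|([0,\infty))$. *)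

theory Defs
  imports "HOL-Analysis.Analysis"
begin

definition levy_measure :: "real measure \<Rightarrow> bool" where
  "levy_measure \<mu> \<longleftrightarrow> sets \<mu> = sets borel \<and> emeasure \<mu> {..0} = 0
     \<and> integrable \<mu> (\<lambda>s. s / (1 + s))"

definition bernstein :: "real \<Rightarrow> real \<Rightarrow> real measure \<Rightarrow> complex \<Rightarrow> complex" where
  "bernstein a b \<mu> z = complex_of_real a + complex_of_real b * z
     + (\<integral>s. (1 - exp (- (complex_of_real s * z))) \<partial>\<mu>)"

definition rate :: "real \<Rightarrow> real \<Rightarrow> real measure \<Rightarrow> real \<Rightarrow> real" where
  "rate a b \<mu> t = a / 2 + b / t + (\<integral>s. min (s / t) 1 \<partial>\<mu>)"

definition Cfun :: "real \<Rightarrow> complex \<Rightarrow> complex" where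
  "Cfun t z = (1 - exp (- (complex_of_real t * z))) / (complex_of_real t * z)"

text \<open>A bounded complex Radon measure nu on [0,inf) is represented as nu = f M with M a finite
  positive Borel measure concentrated on [0,inf) and f in L^1(M) (every complex measure has
  this form, e.g. with M = |nu|); its total variation |nu|([0,inf)) is then int |f| dM.
  laplace_repr M f F says that F coincides on the open right half plane with the Laplace
  transform of f M.\<close>
definition laplace_repr :: "real measure \<Rightarrow> (real \<Rightarrow> complex) \<Rightarrow> (complex \<Rightarrow> complex) \<Rightarrow> bool" where
  "laplace_repr M f F \<longleftrightarrow> sets M = sets borel \<and> finite_measure M \<and> emeasure M {..<0} = 0
     \<and> integrable M f
     \<and> (\<forall>z. 0 < Re z \<longrightarrow> F z = (\<integral>s. exp (- (complex_of_real s * z)) * f s \<partial>M))"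

definition total_variation :: "real measure \<Rightarrow> (real \<Rightarrow> complex) \<Rightarrow> real" where
  "total_variation M f = (\<integral>s. norm (f s) \<partial>M)"

end

theory Submission
  imports Defs "HOL-Probability.Probability"
begin

text \<open>
  For \<open>t > 0\<close> the function \<open>C\<^sub>t g\<close> is the Laplace transform of the signed measure
  \<open>\<nu>\<^sub>t = (b/t) (\<delta>\<^sub>0 - \<delta>\<^sub>t) + \<rho>\<^sub>t(x) dx\<close> with
  \<open>\<rho>\<^sub>t = (a 1\<^bsub>[0,t]\<^esub> + \<integral> (1\<^bsub>[0,t]\<^esub> - 1\<^bsub>[s,s+t]\<^esub>) \<mu>(ds)) / t\<close>,
  because \<open>(1 - e\<^sup>-\<^sup>t\<^sup>z) (1 - e\<^sup>-\<^sup>s\<^sup>z) / z\<close> is the Laplace transform of \<open>1\<^bsub>[0,t]\<^esub> - 1\<^bsub>[s,s+t]\<^esub>\<close>.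
  This kernel is nonnegative on \<open>[0,t]\<close> and nonpositive on \<open>(t,\<infinity>)\<close>, so by Tonelli
  \<open>\<integral> |\<rho>\<^sub>t| = a + (2/t) \<integral> min s t \<mu>(ds)\<close>, i.e. \<open>|\<nu>\<^sub>t| = 2 r(t)\<close>.

  Conversely a bounded measure on \<open>[0,\<infinity>)\<close> is determined by its Laplace transform on the right
  half plane: damping by \<open>e\<^sup>-\<^sup>\<epsilon>\<^sup>x\<close> turns it into a Fourier transform, and Fourier transforms of
  finite measures are injective (Levy's uniqueness theorem, applied to the Jordan decomposition).
  Testing against \<open>sgn (cnj f)\<close> then shows that all representations of \<open>C\<^sub>t g\<close> have the same
  total variation.
\<close>

section \<open>Sums of measures on the real line\<close>


definition add_measure :: "real measure \<Rightarrow> real measure \<Rightarrow> real measure" where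
  "add_measure A B = measure_of UNIV (sets borel) (\<lambda>X. emeasure A X + emeasure B X)"

lemma sets_add_measure [simp, measurable_cong]: "sets (add_measure A B) = sets borel"
  unfolding add_measure_def using sets.sigma_sets_eq[of borel]
  by (simp add: sets_measure_of_conv)

lemma space_add_measure [simp]: "space (add_measure A B) = UNIV"
  unfolding add_measure_def by (simp add: space_measure_of_conv)

lemma emeasure_add_measure:
  assumes "sets A = sets borel" "sets B = sets borel" "X \<in> sets borel"
  shows "emeasure (add_measure A B) X = emeasure A X + emeasure B X"
  unfolding add_measure_def
proof (rule emeasure_measure_of_sigma)
  show "sigma_algebra UNIV (sets borel)"
    using sets.sigma_algebra_axioms[of borel] by simp
  show "countably_additive (sets borel) (\<lambda>X. emeasure A X + emeasure B X)"
  proof (rule countably_additiveI)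
    fix F :: "nat \<Rightarrow> real set" assume "range F \<subseteq> sets borel" "disjoint_family F"
    then show "(\<Sum>i. emeasure A (F i) + emeasure B (F i)) = emeasure A (\<Union>i. F i) + emeasure B (\<Union>i. F i)"
      using assms by (simp add: suminf_add[symmetric] suminf_emeasure)
  qed
qed (use assms in \<open>auto simp: positive_def\<close>)

lemma nn_integral_add_measure:
  assumes A: "sets A = sets borel" and B: "sets B = sets borel"
    and u: "u \<in> borel_measurable borel"
  shows "(\<integral>\<^sup>+x. u x \<partial>add_measure A B) = (\<integral>\<^sup>+x. u x \<partial>A) + (\<integral>\<^sup>+x. u x \<partial>B)"
  using u
proof (induct rule: borel_measurable_induct)
  case (cong f g)
  then have "f = g" by auto
  with cong show ?case by simp
next
  case (set X)
  then show ?case using A B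
    by (simp add: emeasure_add_measure nn_integral_indicator[where M=A] nn_integral_indicator[where M=B])
next
  case (mult u c)
  then show ?case using A B
    by (simp add: nn_integral_cmult[where M=A] nn_integral_cmult[where M=B] nn_integral_cmult distrib_left)
next
  case (add u v)
  then show ?case using A B
    by (simp add: nn_integral_add[where M=A] nn_integral_add[where M=B] nn_integral_add algebra_simps)
next
  case (seq U)
  have SUP_eq: "(\<integral>\<^sup>+x. (SUP i. U i) x \<partial>M) = (SUP i. \<integral>\<^sup>+x. U i x \<partial>M)"
    if "sets M = sets borel" for M :: "real measure"
    unfolding SUP_apply
    using seq by (intro nn_integral_monotone_convergence_SUP) (auto simp: measurable_cong_sets[OF that refl])
  have "incseq (\<lambda>i. \<integral>\<^sup>+x. U i x \<partial>A)" "incseq (\<lambda>i. \<integral>\<^sup>+x. U i x \<partial>B)"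
    using seq by (auto intro: incseq_nn_integral)
  then show ?case
    unfolding SUP_eq[OF A] SUP_eq[OF B] SUP_eq[OF sets_add_measure] seq(3)
    by (simp add: ennreal_SUP_add)
qed

lemma finite_measure_add_measure:
  assumes "finite_measure A" "finite_measure B" "sets A = sets borel" "sets B = sets borel"
  shows "finite_measure (add_measure A B)"
proof (rule finite_measureI)
  have "emeasure (add_measure A B) UNIV = emeasure A (space A) + emeasure B (space B)"
    using assms by (simp add: emeasure_add_measure sets_eq_imp_space_eq[of _ borel])
  then show "emeasure (add_measure A B) (space (add_measure A B)) \<noteq> \<infinity>"
    using assms by (simp add: finite_measure.emeasure_finite)
qed

lemma nn_integral_less_top_of_integrable:
  fixes f :: "'a \<Rightarrow> real"
  assumes "integrable M f"
  shows "(\<integral>\<^sup>+x. ennreal (f x) \<partial>M) < \<infinity>"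
proof -
  have "(\<integral>\<^sup>+x. ennreal (f x) \<partial>M) \<le> (\<integral>\<^sup>+x. ennreal (norm (f x)) \<partial>M)"
    by (intro nn_integral_mono ennreal_leI) simp
  also have "\<dots> < \<infinity>"
    using assms by (simp add: integrable_iff_bounded)
  finally show ?thesis .
qed

lemma integrable_add_measure:
  fixes f :: "real \<Rightarrow> 'b::{banach, second_countable_topology}"
  assumes A: "sets A = sets borel" and B: "sets B = sets borel"
    and f: "f \<in> borel_measurable borel" and fA: "integrable A f" and fB: "integrable B f"
  shows "integrable (add_measure A B) f"
  using fA fB f by (simp add: integrable_iff_bounded nn_integral_add_measure[OF A B]
      measurable_cong_sets[OF A refl] measurable_cong_sets[OF B refl])

lemma integral_add_measure_real:
  fixes f :: "real \<Rightarrow> real"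
  assumes A: "sets A = sets borel" and B: "sets B = sets borel"
    and f: "f \<in> borel_measurable borel" and fA: "integrable A f" and fB: "integrable B f"
  shows "integral\<^sup>L (add_measure A B) f = integral\<^sup>L A f + integral\<^sup>L B f"
proof -
  have nn: "(\<integral>\<^sup>+x. ennreal (u x) \<partial>add_measure A B) = (\<integral>\<^sup>+x. ennreal (u x) \<partial>A) + (\<integral>\<^sup>+x. ennreal (u x) \<partial>B)"
    if "u \<in> borel_measurable borel" for u :: "real \<Rightarrow> real"
    using that by (intro nn_integral_add_measure[OF A B]) measurable
  have fin: "(\<integral>\<^sup>+x. ennreal (u x) \<partial>M) < \<infinity>" if "integrable M u" for u :: "real \<Rightarrow> real" and M
    using that by (rule nn_integral_less_top_of_integrable)
  have f': "(\<lambda>x. - f x) \<in> borel_measurable borel"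
    using f by measurable
  show ?thesis
    unfolding real_lebesgue_integral_def[OF integrable_add_measure[OF A B f fA fB]]
      real_lebesgue_integral_def[OF fA] real_lebesgue_integral_def[OF fB] nn[OF f] nn[OF f']
    using fin[OF fA] fin[OF fB] fin[of A "\<lambda>x. - f x"] fin[of B "\<lambda>x. - f x"] fA fB
    by (simp add: enn2real_plus)
qed

lemma integral_add_measure:
  fixes f :: "real \<Rightarrow> 'b::euclidean_space"
  assumes A: "sets A = sets borel" and B: "sets B = sets borel"
    and f: "f \<in> borel_measurable borel" and fA: "integrable A f" and fB: "integrable B f"
  shows "integral\<^sup>L (add_measure A B) f = integral\<^sup>L A f + integral\<^sup>L B f"
proof (rule euclidean_eqI)
  fix i :: 'b
  show "integral\<^sup>L (add_measure A B) f \<bullet> i = (integral\<^sup>L A f + integral\<^sup>L B f) \<bullet> i"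
    using integral_add_measure_real[OF A B _ integrable_inner_left[OF fA] integrable_inner_left[OF fB], of i]
      f fA fB integrable_add_measure[OF A B f fA fB] by (simp add: inner_add_left)
qed

section \<open>Measures determined by their Fourier and Laplace transforms\<close>

lemma integrable_iexp:
  assumes "finite_measure M" "sets M = sets borel"
  shows "integrable M (\<lambda>x. iexp (w * x))"
proof -
  interpret finite_measure M by fact
  show ?thesis
    by (rule integrable_const_bound[where B=1]) (auto simp: measurable_cong_sets[OF assms(2) refl])
qed

lemma char_add_measure:
  assumes "finite_measure A" "finite_measure B" "sets A = sets borel" "sets B = sets borel"
  shows "char (add_measure A B) w = char A w + char B w"
  unfolding char_def using assms by (intro integral_add_measure integrable_iexp) auto

lemma char_density_const:
  assumes "sets M = sets borel" "0 \<le> c"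
  shows "char (density M (\<lambda>_. ennreal c)) w = c * char M w"
  unfolding char_def using assms
  by (subst integral_density) (auto simp: measurable_cong_sets[OF assms(1) refl] scaleR_conv_of_real)

lemma real_distribution_normalize:
  assumes "finite_measure M" "sets M = sets borel" and c: "measure M UNIV = c" "0 < c"
  shows "real_distribution (density M (\<lambda>_. ennreal (1 / c)))"
proof (intro real_distribution.intro real_distribution_axioms.intro prob_spaceI)
  have space: "space M = UNIV"
    using sets_eq_imp_space_eq[OF assms(2)] by simp
  then have "emeasure M UNIV = ennreal c"
    using assms finite_measure.emeasure_eq_measure[of M UNIV] by simp
  then show "emeasure (density M (\<lambda>_. ennreal (1 / c))) (space (density M (\<lambda>_. ennreal (1 / c)))) = 1"
    using assms(2) c space by (simp add: emeasure_density_const ennreal_mult[symmetric])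
qed (use assms in simp)

lemma Levy_uniqueness_finite:
  assumes fA: "finite_measure A" and fB: "finite_measure B"
    and sA: "sets A = sets borel" and sB: "sets B = sets borel"
    and ch: "char A = char B"
  shows "A = B"
proof -
  have spA: "space A = UNIV" and spB: "space B = UNIV"
    using sets_eq_imp_space_eq[OF sA] sets_eq_imp_space_eq[OF sB] by simp_all
  define c where "c = measure A UNIV"
  have "char A 0 = c" "char B 0 = measure B UNIV"
    unfolding char_def c_def by (simp_all add: spA spB scaleR_conv_of_real)
  then have cB: "measure B UNIV = c"
    using ch by simp
  have eA: "emeasure A X = ennreal c * emeasure (density A (\<lambda>_. ennreal (1 / c))) X"
    and eB: "emeasure B X = ennreal c * emeasure (density B (\<lambda>_. ennreal (1 / c))) X"
    if "X \<in> sets borel" "c \<noteq> 0" for X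
    using that sA sB measure_nonneg[of A UNIV] unfolding c_def
    by (simp_all add: emeasure_density_const mult.assoc[symmetric] ennreal_mult[symmetric])
  show ?thesis
  proof (cases "c = 0")
    case True
    then have "emeasure A (space A) = 0" "emeasure B (space B) = 0"
      using cB fA fB unfolding c_def by (simp_all add: spA spB finite_measure.emeasure_eq_measure)
    then show ?thesis
      using sA sB emeasure_space[of A] emeasure_space[of B] by (intro measure_eqI) auto
  next
    case False
    then have c: "0 < c"
      unfolding c_def by (simp add: less_le)
    have "char (density A (\<lambda>_. ennreal (1 / c))) = char (density B (\<lambda>_. ennreal (1 / c)))"
      using ch c sA sB by (simp add: fun_eq_iff char_density_const)
    then have "density A (\<lambda>_. ennreal (1 / c)) = density B (\<lambda>_. ennreal (1 / c))"
      using real_distribution_normalize[OF fA sA c_def[symmetric] c]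
        real_distribution_normalize[OF fB sB cB c] by (rule Levy_uniqueness[rotated 2])
    then show ?thesis
      using sA sB eA eB False by (intro measure_eqI) auto
  qed
qed

lemma finite_measure_density_pos_part:
  fixes u :: "real \<Rightarrow> real"
  assumes "finite_measure M" "integrable M u"
  shows "finite_measure (density M (\<lambda>x. ennreal (max (u x) 0)))"
proof (rule finite_measureI)
  have "emeasure (density M (\<lambda>x. ennreal (max (u x) 0))) (space M) = (\<integral>\<^sup>+x. ennreal (max (u x) 0) \<partial>M)"
    using assms by (subst emeasure_density) (auto intro!: nn_integral_cong)
  also have "\<dots> < \<infinity>"
    using assms by (intro nn_integral_less_top_of_integrable) auto
  finally show "emeasure (density M (\<lambda>x. ennreal (max (u x) 0))) (space (density M (\<lambda>x. ennreal (max (u x) 0)))) \<noteq> \<infinity>"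
    by simp
qed

lemma integral_density_pos_part_diff:
  fixes u :: "'a \<Rightarrow> real" and \<phi> :: "'a \<Rightarrow> 'b::{banach, second_countable_topology}"
  assumes u: "integrable M u" and \<phi>: "\<phi> \<in> borel_measurable M" and bound: "\<And>x. norm (\<phi> x) \<le> C"
  shows "integral\<^sup>L (density M (\<lambda>x. ennreal (max (u x) 0))) \<phi>
       - integral\<^sup>L (density M (\<lambda>x. ennreal (max (- u x) 0))) \<phi> = (\<integral>x. u x *\<^sub>R \<phi> x \<partial>M)"
proof -
  have int: "integrable M (\<lambda>x. v x *\<^sub>R \<phi> x)" if "integrable M v" for v
  proof (rule Bochner_Integration.integrable_bound[where f="\<lambda>x. C * norm (v x)"])
    have "norm (v x *\<^sub>R \<phi> x) \<le> norm (C * norm (v x))" for x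
    proof -
      have "norm (v x *\<^sub>R \<phi> x) \<le> \<bar>v x\<bar> * C"
        using bound[of x] by (simp add: mult_left_mono)
      also have "\<dots> = norm (C * norm (v x))"
        using order_trans[OF norm_ge_zero bound[of x]] by (simp add: abs_mult)
      finally show ?thesis .
    qed
    then show "AE x in M. norm (v x *\<^sub>R \<phi> x) \<le> norm (C * norm (v x))"
      by simp
  qed (use that \<phi> in auto)
  have "(\<integral>x. u x *\<^sub>R \<phi> x \<partial>M) = (\<integral>x. max (u x) 0 *\<^sub>R \<phi> x - max (- u x) 0 *\<^sub>R \<phi> x \<partial>M)"
    by (intro Bochner_Integration.integral_cong) (auto simp: max_def scaleR_diff_left[symmetric])
  also have "\<dots> = (\<integral>x. max (u x) 0 *\<^sub>R \<phi> x \<partial>M) - (\<integral>x. max (- u x) 0 *\<^sub>R \<phi> x \<partial>M)"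
    using u by (intro Bochner_Integration.integral_diff int) auto
  moreover have "integral\<^sup>L (density M (\<lambda>x. ennreal (max (v x) 0))) \<phi> = (\<integral>x. max (v x) 0 *\<^sub>R \<phi> x \<partial>M)"
    if "integrable M v" for v
    using that \<phi> by (subst integral_density) auto
  ultimately show ?thesis
    using u by simp
qed

lemma fourier_eq_imp_integral_eq_real:
  fixes p q h :: "real \<Rightarrow> real"
  assumes fM: "finite_measure M" and fN: "finite_measure N"
    and sM: "sets M = sets borel" and sN: "sets N = sets borel"
    and p: "integrable M p" and q: "integrable N q"
    and eq: "\<And>w. (\<integral>x. iexp (w * x) * complex_of_real (p x) \<partial>M) = (\<integral>x. iexp (w * x) * complex_of_real (q x) \<partial>N)"
    and h: "h \<in> borel_measurable borel" and h_bound: "\<And>x. \<bar>h x\<bar> \<le> C"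
  shows "(\<integral>x. h x * p x \<partial>M) = (\<integral>x. h x * q x \<partial>N)"
proof -
  define pos where "pos (K :: real measure) u = density K (\<lambda>x. ennreal (max (u x) 0))" for K u
  have finite: "finite_measure (pos K u)" and sets: "sets (pos K u) = sets borel"
    if "finite_measure K" "sets K = sets borel" "integrable K u" for K u
    using that finite_measure_density_pos_part[of K u] unfolding pos_def by simp_all
  note F = finite[OF fM sM p] finite[OF fM sM integrable_minus[OF p]]
    finite[OF fN sN q] finite[OF fN sN integrable_minus[OF q]]
  note S = sets[OF fM sM p] sets[OF fM sM integrable_minus[OF p]]
    sets[OF fN sN q] sets[OF fN sN integrable_minus[OF q]]
  have diff: "integral\<^sup>L (pos K u) \<phi> - integral\<^sup>L (pos K (\<lambda>x. - u x)) \<phi> = (\<integral>x. u x *\<^sub>R \<phi> x \<partial>K)"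
    if "sets K = sets borel" "integrable K u" "\<phi> \<in> borel_measurable borel" "\<And>x. norm (\<phi> x) \<le> B"
    for K u B and \<phi> :: "real \<Rightarrow> 'b::{banach, second_countable_topology}"
    using that unfolding pos_def
    by (intro integral_density_pos_part_diff) (auto simp: measurable_cong_sets[OF that(1) refl])
  \<comment> \<open>\<open>p M - q N = 0\<close> as signed measures is the equality \<open>p\<^sup>+ M + q\<^sup>- N = p\<^sup>- M + q\<^sup>+ N\<close> of finite measures\<close>
  have "char (pos M p) w - char (pos M (\<lambda>x. - p x)) w = char (pos N q) w - char (pos N (\<lambda>x. - q x)) w" for w
    using eq[of w] unfolding char_def
    by (simp add: diff[OF sM p, of _ 1] diff[OF sN q, of _ 1] scaleR_conv_of_real mult.commute)
  then have "char (add_measure (pos M p) (pos N (\<lambda>x. - q x))) = char (add_measure (pos M (\<lambda>x. - p x)) (pos N q))"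
    using F S by (simp add: fun_eq_iff char_add_measure algebra_simps)
  then have eq_sum: "add_measure (pos M p) (pos N (\<lambda>x. - q x)) = add_measure (pos M (\<lambda>x. - p x)) (pos N q)"
    using F S by (intro Levy_uniqueness_finite finite_measure_add_measure) auto
  have int: "integrable (pos K u) h" if "finite_measure (pos K u)" "sets (pos K u) = sets borel" for K :: "real measure" and u
  proof -
    interpret finite_measure "pos K u" by fact
    show ?thesis
      using h h_bound that(2) by (intro integrable_const_bound[where B=C]) (auto simp: measurable_cong_sets[OF that(2) refl])
  qed
  have "integral\<^sup>L (pos M p) h + integral\<^sup>L (pos N (\<lambda>x. - q x)) h
      = integral\<^sup>L (pos M (\<lambda>x. - p x)) h + integral\<^sup>L (pos N q) h"
    using integral_add_measure[OF S(1) S(4) h int[OF F(1) S(1)] int[OF F(4) S(4)]]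
      integral_add_measure[OF S(2) S(3) h int[OF F(2) S(2)] int[OF F(3) S(3)]]
    unfolding eq_sum by simp
  then show ?thesis
    using diff[OF sM p h, of C] diff[OF sN q h, of C] h_bound by (simp add: mult.commute)
qed

lemma integrable_bounded_mult:
  fixes u \<phi> :: "'a \<Rightarrow> 'b::{real_normed_algebra, banach, second_countable_topology}"
  assumes u: "integrable M u" and \<phi>: "\<phi> \<in> borel_measurable M" and bound: "\<And>x. norm (\<phi> x) \<le> C"
  shows "integrable M (\<lambda>x. \<phi> x * u x)"
proof (rule Bochner_Integration.integrable_bound[where f="\<lambda>x. C * norm (u x)"])
  have "norm (\<phi> x * u x) \<le> norm (C * norm (u x))" for x
  proof -
    have "norm (\<phi> x * u x) \<le> C * norm (u x)"
      using norm_mult_ineq[of "\<phi> x" "u x"] bound[of x] by (meson mult_right_mono norm_ge_zero order_trans)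
    also have "\<dots> = norm (C * norm (u x))"
      using order_trans[OF norm_ge_zero bound[of x]] by (simp add: abs_mult)
    finally show ?thesis .
  qed
  then show "AE x in M. norm (\<phi> x * u x) \<le> norm (C * norm (u x))"
    by simp
qed (use u \<phi> in auto)

lemma integral_iexp_Re_Im:
  fixes f :: "real \<Rightarrow> complex"
  assumes f: "integrable M f" and sM: "sets M = sets borel"
  shows "(\<integral>x. iexp (w * x) * Re (f x) \<partial>M)
      = ((\<integral>x. iexp (w * x) * f x \<partial>M) + cnj (\<integral>x. iexp (- w * x) * f x \<partial>M)) / 2"
    and "(\<integral>x. iexp (w * x) * Im (f x) \<partial>M)
      = ((\<integral>x. iexp (w * x) * f x \<partial>M) - cnj (\<integral>x. iexp (- w * x) * f x \<partial>M)) / (2 * \<i>)"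
proof -
  have int: "integrable M (\<lambda>x. iexp (v * x) * u x)" if "integrable M u" for v u
    using that by (intro integrable_bounded_mult[where C=1]) (auto simp: measurable_cong_sets[OF sM refl])
  have cnj_eq: "cnj (\<integral>x. iexp (- w * x) * f x \<partial>M) = (\<integral>x. iexp (w * x) * cnj (f x) \<partial>M)"
  proof -
    have "cnj (\<integral>x. iexp (- w * x) * f x \<partial>M) = (\<integral>x. cnj (iexp (- w * x) * f x) \<partial>M)"
      by (rule Bochner_Integration.integral_cnj[symmetric])
    also have "\<dots> = (\<integral>x. iexp (w * x) * cnj (f x) \<partial>M)"
      by (simp add: exp_cnj)
    finally show ?thesis .
  qed
  let ?F = "\<lambda>x. iexp (w * x) * f x" and ?G = "\<lambda>x. iexp (w * x) * cnj (f x)"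
  have "(\<integral>x. iexp (w * x) * Re (f x) \<partial>M) = (\<integral>x. (?F x + ?G x) / 2 \<partial>M)"
    by (intro Bochner_Integration.integral_cong) (simp_all add: complex_eq_iff)
  then show "(\<integral>x. iexp (w * x) * Re (f x) \<partial>M)
      = ((\<integral>x. iexp (w * x) * f x \<partial>M) + cnj (\<integral>x. iexp (- w * x) * f x \<partial>M)) / 2"
    unfolding cnj_eq using int[OF f] int[OF integrable_cnj[OF f]] by simp
  have "(\<integral>x. iexp (w * x) * Im (f x) \<partial>M) = (\<integral>x. (?F x - ?G x) / (2 * \<i>) \<partial>M)"
    by (intro Bochner_Integration.integral_cong) (simp_all add: complex_eq_iff)
  then show "(\<integral>x. iexp (w * x) * Im (f x) \<partial>M)
      = ((\<integral>x. iexp (w * x) * f x \<partial>M) - cnj (\<integral>x. iexp (- w * x) * f x \<partial>M)) / (2 * \<i>)"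
    unfolding cnj_eq using int[OF f] int[OF integrable_cnj[OF f]] by simp
qed

lemma fourier_eq_imp_integral_eq:
  fixes f g h :: "real \<Rightarrow> complex"
  assumes fM: "finite_measure M" and fN: "finite_measure N"
    and sM: "sets M = sets borel" and sN: "sets N = sets borel"
    and f: "integrable M f" and g: "integrable N g"
    and eq: "\<And>w. (\<integral>x. iexp (w * x) * f x \<partial>M) = (\<integral>x. iexp (w * x) * g x \<partial>N)"
    and h: "h \<in> borel_measurable borel" and h_bound: "\<And>x. norm (h x) \<le> C"
  shows "(\<integral>x. h x * f x \<partial>M) = (\<integral>x. h x * g x \<partial>N)"
proof -
  have eq_Re: "(\<integral>x. iexp (w * x) * Re (f x) \<partial>M) = (\<integral>x. iexp (w * x) * Re (g x) \<partial>N)"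
    and eq_Im: "(\<integral>x. iexp (w * x) * Im (f x) \<partial>M) = (\<integral>x. iexp (w * x) * Im (g x) \<partial>N)" for w
    unfolding integral_iexp_Re_Im[OF f sM] integral_iexp_Re_Im[OF g sN] by (simp_all only: eq)
  have bounds: "\<bar>Re (h x)\<bar> \<le> C" "\<bar>Im (h x)\<bar> \<le> C" for x
    using abs_Re_le_cmod abs_Im_le_cmod h_bound order_trans by blast+
  have transfer: "(\<integral>x. P (h x) * Q (f x) \<partial>M) = (\<integral>x. P (h x) * Q (g x) \<partial>N)"
    if "P = Re \<or> P = Im" "Q = Re \<or> Q = Im" for P Q
  proof (rule fourier_eq_imp_integral_eq_real[OF fM fN sM sN])
    show "integrable M (\<lambda>x. Q (f x))" "integrable N (\<lambda>x. Q (g x))"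
      "\<And>w. (\<integral>x. iexp (w * x) * Q (f x) \<partial>M) = (\<integral>x. iexp (w * x) * Q (g x) \<partial>N)"
      using that(2) f g eq_Re eq_Im by auto
    show "(\<lambda>x. P (h x)) \<in> borel_measurable borel" "\<And>x. \<bar>P (h x)\<bar> \<le> C"
      using that(1) h bounds by auto
  qed
  have expand: "(\<integral>x. h x * u x \<partial>K)
      = complex_of_real ((\<integral>x. Re (h x) * Re (u x) \<partial>K) - (\<integral>x. Im (h x) * Im (u x) \<partial>K))
      + \<i> * complex_of_real ((\<integral>x. Re (h x) * Im (u x) \<partial>K) + (\<integral>x. Im (h x) * Re (u x) \<partial>K))"
    if u: "integrable K u" and sK: "sets K = sets borel" for K u
  proof -
    have hK: "h \<in> borel_measurable K"
      using h by (simp add: measurable_cong_sets[OF sK refl])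
    have int: "integrable K (\<lambda>x. P (h x) * Q (u x))" if "integrable K (\<lambda>x. Q (u x))" "\<And>x. \<bar>P (h x)\<bar> \<le> C"
      "(\<lambda>x. P (h x)) \<in> borel_measurable K" for P Q :: "complex \<Rightarrow> real"
      using that by (intro integrable_bounded_mult[where C=C]) auto
    have hu: "integrable K (\<lambda>x. h x * u x)"
      using u hK h_bound by (intro integrable_bounded_mult)
    show ?thesis
      using int[of Re Re] int[of Im Im] int[of Re Im] int[of Im Re] u hK bounds
      by (simp add: complex_eq_iff integral_Re[OF hu, symmetric] integral_Im[OF hu, symmetric])
  qed
  show ?thesis
    unfolding expand[OF f sM] expand[OF g sN] using transfer by simp
qed

lemma laplace_reprD:
  assumes "laplace_repr M f F"
  shows "sets M = sets borel" "finite_measure M" "integrable M f" "AE x in M. 0 \<le> x"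
    "\<And>z. 0 < Re z \<Longrightarrow> F z = (\<integral>s. exp (- (complex_of_real s * z)) * f s \<partial>M)"
proof -
  show "AE x in M. 0 \<le> x"
    using assms unfolding laplace_repr_def by (intro AE_I[where N="{..<0}"]) auto
qed (use assms in \<open>auto simp: laplace_repr_def\<close>)

lemma laplace_repr_damped_fourier:
  assumes L: "laplace_repr M f F" and \<epsilon>: "0 < \<epsilon>"
  shows "(\<integral>x. iexp (w * x) * (complex_of_real (min 1 (exp (- (\<epsilon> * x)))) * f x) \<partial>M) = F (Complex \<epsilon> (- w))"
proof -
  note L = laplace_reprD[OF L]
  have f: "f \<in> borel_measurable borel"
    using borel_measurable_integrable[OF L(3)] by (simp add: measurable_cong_sets[OF L(1) refl])
  have "(\<integral>x. iexp (w * x) * (complex_of_real (min 1 (exp (- (\<epsilon> * x)))) * f x) \<partial>M)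
      = (\<integral>x. exp (- (complex_of_real x * Complex \<epsilon> (- w))) * f x \<partial>M)"
  proof (rule integral_cong_AE)
    show "AE x in M. iexp (w * x) * (complex_of_real (min 1 (exp (- (\<epsilon> * x)))) * f x)
        = exp (- (complex_of_real x * Complex \<epsilon> (- w))) * f x"
      using L(4)
    proof eventually_elim
      case (elim x)
      have "- (complex_of_real x * Complex \<epsilon> (- w)) = complex_of_real (- (\<epsilon> * x)) + \<i> * complex_of_real (w * x)"
        by (simp add: complex_eq_iff)
      then have "exp (- (complex_of_real x * Complex \<epsilon> (- w))) = exp (- (\<epsilon> * x)) * iexp (w * x)"
        by (simp only: exp_add exp_of_real)
      then show ?case
        using elim \<epsilon> by simp
    qed
  qed (use f in \<open>simp_all add: measurable_cong_sets[OF L(1) refl]\<close>)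
  also have "\<dots> = F (Complex \<epsilon> (- w))"
    using L(5)[of "Complex \<epsilon> (- w)"] \<epsilon> by simp
  finally show ?thesis .
qed

lemma tendsto_integral_damped:
  fixes h u :: "real \<Rightarrow> complex"
  assumes u: "integrable K u" and sK: "sets K = sets borel"
    and h: "h \<in> borel_measurable borel" and h_bound: "\<And>x. norm (h x) \<le> C"
  shows "(\<lambda>n. \<integral>x. h x * (complex_of_real (min 1 (exp (- (1 / Suc n * x)))) * u x) \<partial>K)
    \<longlonglongrightarrow> (\<integral>x. h x * u x \<partial>K)"
proof -
  define d where "d n x = complex_of_real (min 1 (exp (- (1 / Suc n * x))))" for n and x :: real
  have d: "d n \<in> borel_measurable borel" "norm (d n x) \<le> 1" for n x
    unfolding d_def by auto
  have "(\<lambda>n. \<integral>x. h x * (d n x * u x) \<partial>K) \<longlonglongrightarrow> (\<integral>x. h x * u x \<partial>K)"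
  proof (rule integral_dominated_convergence[where w="\<lambda>x. C * norm (u x)"])
    show "AE x in K. (\<lambda>n. h x * (d n x * u x)) \<longlonglongrightarrow> h x * u x"
    proof (intro AE_I2)
      fix x
      have "(\<lambda>n. 1 / Suc n * x) \<longlonglongrightarrow> 0"
        using tendsto_mult[OF LIMSEQ_inverse_real_of_nat tendsto_const, of x] by (simp add: inverse_eq_divide)
      then have "(\<lambda>n. d n x) \<longlonglongrightarrow> complex_of_real (min 1 (exp (- 0)))"
        unfolding d_def by (intro tendsto_intros)
      then have "(\<lambda>n. h x * (d n x * u x)) \<longlonglongrightarrow> h x * (1 * u x)"
        by (intro tendsto_mult tendsto_const) simp
      then show "(\<lambda>n. h x * (d n x * u x)) \<longlonglongrightarrow> h x * u x"
        by simp
    qed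
    show "AE x in K. norm (h x * (d n x * u x)) \<le> C * norm (u x)" for n
    proof (intro AE_I2)
      fix x
      have "norm (d n x) * norm (u x) \<le> norm (u x)"
        using d(2) by (intro mult_left_le_one_le) auto
      then show "norm (h x * (d n x * u x)) \<le> C * norm (u x)"
        unfolding norm_mult using h_bound[of x] order_trans[OF norm_ge_zero h_bound[of x]]
        by (intro mult_mono) auto
    qed
    have "u \<in> borel_measurable borel"
      using borel_measurable_integrable[OF u] by (simp add: measurable_cong_sets[OF sK refl])
    then show "(\<lambda>x. h x * u x) \<in> borel_measurable K" "(\<lambda>x. h x * (d n x * u x)) \<in> borel_measurable K" for n
      using h d(1)[of n] by (simp_all add: measurable_cong_sets[OF sK refl])
  qed (use u in simp)
  then show ?thesis
    unfolding d_def .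
qed

lemma laplace_repr_integral_eq:
  fixes h :: "real \<Rightarrow> complex"
  assumes LM: "laplace_repr M f F" and LN: "laplace_repr N g F"
    and h: "h \<in> borel_measurable borel" and h_bound: "\<And>x. norm (h x) \<le> C"
  shows "(\<integral>x. h x * f x \<partial>M) = (\<integral>x. h x * g x \<partial>N)"
proof -
  note M = laplace_reprD[OF LM] and N = laplace_reprD[OF LN]
  \<comment> \<open>the Fourier transform of \<open>d n f M\<close> is \<open>F\<close> on the line \<open>Re z = 1 / Suc n\<close>\<close>
  define d where "d n x = complex_of_real (min 1 (exp (- (1 / Suc n * x))))" for n and x :: real
  have "(\<integral>x. h x * (d n x * f x) \<partial>M) = (\<integral>x. h x * (d n x * g x) \<partial>N)" for n
  proof (rule fourier_eq_imp_integral_eq[OF M(2) N(2) M(1) N(1) _ _ _ h h_bound])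
    have "d n \<in> borel_measurable borel" "norm (d n x) \<le> 1" for x
      unfolding d_def by auto
    then show "integrable M (\<lambda>x. d n x * f x)" "integrable N (\<lambda>x. d n x * g x)"
      using M(1,3) N(1,3) by (auto intro!: integrable_bounded_mult[where C=1]
          simp: measurable_cong_sets[OF M(1) refl] measurable_cong_sets[OF N(1) refl])
    show "(\<integral>x. iexp (w * x) * (d n x * f x) \<partial>M) = (\<integral>x. iexp (w * x) * (d n x * g x) \<partial>N)" for w
      using laplace_repr_damped_fourier[OF LM _, of "1 / Suc n" w] laplace_repr_damped_fourier[OF LN _, of "1 / Suc n" w]
      unfolding d_def by simp
  qed
  then have "(\<lambda>n. \<integral>x. h x * (d n x * f x) \<partial>M) \<longlonglongrightarrow> (\<integral>x. h x * g x \<partial>N)"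
    using tendsto_integral_damped[OF N(3) N(1) h h_bound] unfolding d_def by simp
  then show ?thesis
    using tendsto_integral_damped[OF M(3) M(1) h h_bound] unfolding d_def by (rule LIMSEQ_unique[rotated])
qed

lemma of_real_norm_eq_sgn_cnj_mult: "complex_of_real (norm z) = sgn (cnj z) * z"
proof (cases "z = 0")
  case False
  have "sgn (cnj z) * z = cnj z * z / complex_of_real (norm z)"
    by (simp add: sgn_div_norm divide_inverse scaleR_conv_of_real)
  also have "\<dots> = complex_of_real (norm z)"
    using False by (simp add: complex_norm_square[symmetric] mult.commute power2_eq_square)
  finally show ?thesis ..
qed simp

lemma total_variation_le:
  assumes LM: "laplace_repr M f F" and LN: "laplace_repr N g F"
  shows "total_variation M f \<le> total_variation N g"
proof -
  note M = laplace_reprD[OF LM] and N = laplace_reprD[OF LN]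
  define h where "h x = sgn (cnj (f x))" for x
  have h: "h \<in> borel_measurable borel" "norm (h x) \<le> 1" for x
  proof -
    have "f \<in> borel_measurable borel"
      using borel_measurable_integrable[OF M(3)] by (simp add: measurable_cong_sets[OF M(1) refl])
    then have "(\<lambda>x. cnj (f x)) \<in> borel_measurable borel"
      by (intro borel_measurable_continuous_on[OF continuous_on_cnj[OF continuous_on_id]])
    then show "h \<in> borel_measurable borel"
      unfolding h_def by measurable
  qed (simp add: h_def norm_sgn)
  have "complex_of_real (total_variation M f) = (\<integral>x. h x * f x \<partial>M)"
    unfolding total_variation_def h_def by (simp add: of_real_norm_eq_sgn_cnj_mult flip: integral_complex_of_real)
  also have "\<dots> = (\<integral>x. h x * g x \<partial>N)"
    using laplace_repr_integral_eq[OF LM LN h] .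
  finally have tv: "complex_of_real (total_variation M f) = (\<integral>x. h x * g x \<partial>N)" .
  have "0 \<le> total_variation M f"
    unfolding total_variation_def by simp
  then have "total_variation M f = norm (complex_of_real (total_variation M f))"
    by simp
  also have "\<dots> = norm (\<integral>x. h x * g x \<partial>N)"
    unfolding tv ..
  also have "\<dots> \<le> (\<integral>x. norm (h x * g x) \<partial>N)"
    by (rule integral_norm_bound)
  also have "\<dots> \<le> total_variation N g"
    unfolding total_variation_def using N(3) h
    by (intro integral_mono integrable_norm integrable_bounded_mult[where C=1])
      (auto simp: measurable_cong_sets[OF N(1) refl] norm_mult mult_left_le_one_le)
  finally show ?thesis .
qed

lemma total_variation_unique:
  assumes "laplace_repr M f F" and "laplace_repr N g F"
  shows "total_variation M f = total_variation N g"
  using total_variation_le[OF assms] total_variation_le[OF assms(2,1)] by simp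

section \<open>Levy measures\<close>

lemma
  assumes "levy_measure \<mu>"
  shows sets_levy_measure: "sets \<mu> = sets borel"
    and space_levy_measure: "space \<mu> = UNIV"
    and AE_levy_measure_pos: "AE s in \<mu>. 0 < s"
    and integrable_levy_measure: "integrable \<mu> (\<lambda>s. s / (1 + s))"
proof -
  show sets: "sets \<mu> = sets borel"
    using assms unfolding levy_measure_def by simp
  then show "space \<mu> = UNIV"
    using sets_eq_imp_space_eq[OF sets] by simp
  show "AE s in \<mu>. 0 < s"
  proof (rule AE_I[where N="{..0}"])
    show "emeasure \<mu> {..0} = 0"
      using assms unfolding levy_measure_def by simp
  qed (auto simp: sets)
  show "integrable \<mu> (\<lambda>s. s / (1 + s))"
    using assms unfolding levy_measure_def by simp
qed

lemma emeasure_levy_measure_greaterThan: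
  assumes L: "levy_measure \<mu>" and c: "0 < c"
  shows "emeasure \<mu> {c<..} < \<infinity>"
proof -
  have "indicator {c<..} s \<le> ennreal ((1 + c) / c * (s / (1 + s)))" if "0 < s" for s
  proof (cases "c < s")
    case True
    then have "c * (1 + s) \<le> (1 + c) * s"
      by (simp add: algebra_simps)
    then have "1 \<le> (1 + c) / c * (s / (1 + s))"
      using c that by (simp add: le_divide_eq)
    then show ?thesis
      using True by simp
  qed (use that c in simp)
  moreover have "{c<..} \<in> sets \<mu>"
    unfolding sets_levy_measure[OF L] by simp
  ultimately have "emeasure \<mu> {c<..} \<le> (\<integral>\<^sup>+s. ennreal ((1 + c) / c * (s / (1 + s))) \<partial>\<mu>)"
    using AE_levy_measure_pos[OF L] nn_integral_indicator[of "{c<..}" \<mu>]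
    by (metis (mono_tags, lifting) eventually_mono nn_integral_mono_AE)
  also have "\<dots> < \<infinity>"
    using integrable_levy_measure[OF L]
    by (intro nn_integral_less_top_of_integrable integrable_mult_right)
  finally show ?thesis .
qed

lemma sigma_finite_levy_measure:
  assumes L: "levy_measure \<mu>"
  shows "sigma_finite_measure \<mu>"
proof -
  define A where "A = insert {..0} (range (\<lambda>n::nat. {1 / Suc n<..}))"
  have "countable A"
    unfolding A_def by simp
  have "A \<subseteq> sets \<mu>"
    unfolding A_def sets_levy_measure[OF L] by auto
  have "x \<in> \<Union> A" for x :: real
  proof (cases "x \<le> 0")
    case False
    then obtain n :: nat where "1 / Suc n < x"
      using reals_Archimedean[of x] by (auto simp: inverse_eq_divide)
    then show ?thesis
      unfolding A_def by blast
  qed (simp add: A_def)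
  then have "\<Union> A = space \<mu>"
    using space_levy_measure[OF L] by blast
  moreover have "emeasure \<mu> a \<noteq> \<infinity>" if "a \<in> A" for a
  proof -
    from that consider "a = {..0}" | n :: nat where "a = {1 / Suc n<..}"
      unfolding A_def by blast
    then show ?thesis
    proof cases
      case 1
      then show ?thesis
        using L unfolding levy_measure_def by simp
    next
      case (2 n)
      then show ?thesis
        using emeasure_levy_measure_greaterThan[OF L, of "1 / Suc n"] by simp
    qed
  qed
  ultimately show ?thesis
    using \<open>countable A\<close> \<open>A \<subseteq> sets \<mu>\<close> by (intro sigma_finite_measure.intro exI[of _ A]) auto
qed

lemma integrable_levy_measure_min:
  assumes L: "levy_measure \<mu>" and t: "0 < t"
  shows "integrable \<mu> (\<lambda>s. min s t)"
proof (rule Bochner_Integration.integrable_bound)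
  show "integrable \<mu> (\<lambda>s. (1 + t) * (s / (1 + s)))"
    using integrable_levy_measure[OF L] by (rule integrable_mult_right)
  have bound: "min s t \<le> (1 + t) * (s / (1 + s))" if "0 < s" for s
    using that t by (cases "s \<le> t") (simp_all add: field_simps)
  show "AE s in \<mu>. norm (min s t) \<le> norm ((1 + t) * (s / (1 + s)))"
    using AE_levy_measure_pos[OF L] by eventually_elim (use t bound in simp)
qed (simp add: measurable_cong_sets[OF sets_levy_measure[OF L] refl])

section \<open>The shift kernel and its mixture over a Levy measure\<close>

text \<open>The kernel is cut off at \<open>s \<le> 0\<close>, where a Levy measure has no mass, so that its sign
  pattern holds pointwise.\<close>

definition shift_kernel :: "real \<Rightarrow> real \<Rightarrow> real \<Rightarrow> real" where
  "shift_kernel t s x = (if 0 < s then indicator {0..t} x - indicator {s..s + t} x else 0)"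

lemma borel_measurable_shift_kernel [measurable (raw)]:
  assumes [measurable]: "f \<in> borel_measurable M" "g \<in> borel_measurable M"
  shows "(\<lambda>x. shift_kernel t (f x) (g x)) \<in> borel_measurable M"
  unfolding shift_kernel_def indicator_def atLeastAtMost_iff by measurable

lemma shift_kernel_neg: "x < 0 \<Longrightarrow> shift_kernel t s x = 0"
  by (simp add: shift_kernel_def)

lemma shift_kernel_nonneg: "x \<le> t \<Longrightarrow> 0 \<le> shift_kernel t s x"
  by (simp add: shift_kernel_def indicator_def)

lemma shift_kernel_nonpos: "t < x \<Longrightarrow> shift_kernel t s x \<le> 0"
  by (simp add: shift_kernel_def indicator_def)

lemma integral_abs_shift_kernel:
  assumes s: "0 < s" and t: "0 < t"
  shows "integrable lborel (\<lambda>x. \<bar>shift_kernel t s x\<bar>)"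
    and "(\<integral>x. \<bar>shift_kernel t s x\<bar> \<partial>lborel) = 2 * min s t"
proof -
  have eq: "(\<lambda>x. \<bar>shift_kernel t s x\<bar>)
      = (\<lambda>x. indicator {0..t} x + indicator {s..s + t} x - 2 * indicator {s..t} x)"
    using s t by (auto simp: fun_eq_iff shift_kernel_def indicator_def)
  have int: "integrable lborel (indicator {\<alpha>..\<beta>} :: real \<Rightarrow> real)" for \<alpha> \<beta> :: real
    by (intro integrable_real_indicator) (auto simp: emeasure_lborel_Icc_eq)
  show "integrable lborel (\<lambda>x. \<bar>shift_kernel t s x\<bar>)"
    unfolding eq using int by auto
  have "(\<integral>x. \<bar>shift_kernel t s x\<bar> \<partial>lborel)
      = measure lborel {0..t} + measure lborel {s..s + t} - 2 * measure lborel {s..t}"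
    unfolding eq using int by (subst Bochner_Integration.integral_diff; (subst Bochner_Integration.integral_add)?) auto
  also have "\<dots> = 2 * min s t"
    using s t by (simp add: min_def)
  finally show "(\<integral>x. \<bar>shift_kernel t s x\<bar> \<partial>lborel) = 2 * min s t" .
qed

lemma laplace_indicator_Icc:
  fixes z :: complex
  assumes \<alpha>\<beta>: "\<alpha> \<le> \<beta>" and z: "z \<noteq> 0"
  shows "integrable lborel (\<lambda>x. indicator {\<alpha>..\<beta>} x *\<^sub>R exp (- (complex_of_real x * z)))"
    and "(\<integral>x. indicator {\<alpha>..\<beta>} x *\<^sub>R exp (- (complex_of_real x * z)) \<partial>lborel)
       = (exp (- (complex_of_real \<alpha> * z)) - exp (- (complex_of_real \<beta> * z))) / z"
proof -
  have cont: "continuous_on S (\<lambda>x. exp (- (complex_of_real x * z)))" for S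
    by (intro continuous_intros)
  show "integrable lborel (\<lambda>x. indicator {\<alpha>..\<beta>} x *\<^sub>R exp (- (complex_of_real x * z)))"
    using borel_integrable_atLeastAtMost'[OF cont] unfolding set_integrable_def .
  have "((\<lambda>x. - exp (- (complex_of_real x * z)) / z) has_vector_derivative exp (- (complex_of_real x * z)))
      (at x within S)" for x S
  proof -
    have "((\<lambda>w. - exp (- (w * z)) / z) has_field_derivative exp (- (complex_of_real x * z))) (at (complex_of_real x))"
      using z by (auto intro!: derivative_eq_intros)
    from has_vector_derivative_real_field[OF this] show ?thesis
      by (rule has_vector_derivative_at_within)
  qed
  then have "(CLBINT x=\<alpha>..\<beta>. exp (- (complex_of_real x * z)))
      = - exp (- (complex_of_real \<beta> * z)) / z - - exp (- (complex_of_real \<alpha> * z)) / z"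
    by (intro interval_integral_FTC_finite cont)
  moreover have "(CLBINT x=\<alpha>..\<beta>. exp (- (complex_of_real x * z))) = (CLBINT x:{\<alpha>..\<beta>}. exp (- (complex_of_real x * z)))"
    using \<alpha>\<beta> by (rule interval_integral_Icc)
  ultimately show "(\<integral>x. indicator {\<alpha>..\<beta>} x *\<^sub>R exp (- (complex_of_real x * z)) \<partial>lborel)
       = (exp (- (complex_of_real \<alpha> * z)) - exp (- (complex_of_real \<beta> * z))) / z"
    unfolding set_lebesgue_integral_def by (simp add: diff_divide_distrib)
qed

lemma laplace_shift_kernel:
  fixes z :: complex
  assumes s: "0 < s" and t: "0 \<le> t" and z: "z \<noteq> 0"
  shows "integrable lborel (\<lambda>x. shift_kernel t s x *\<^sub>R exp (- (complex_of_real x * z)))"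
    and "(\<integral>x. shift_kernel t s x *\<^sub>R exp (- (complex_of_real x * z)) \<partial>lborel)
       = (1 - exp (- (complex_of_real t * z))) / z * (1 - exp (- (complex_of_real s * z)))"
proof -
  note I1 = laplace_indicator_Icc[of 0 t z] and I2 = laplace_indicator_Icc[of s "s + t" z]
  have eq: "(\<lambda>x. shift_kernel t s x *\<^sub>R exp (- (complex_of_real x * z))) =
     (\<lambda>x. indicator {0..t} x *\<^sub>R exp (- (complex_of_real x * z)) - indicator {s..s + t} x *\<^sub>R exp (- (complex_of_real x * z)))"
    using s by (simp add: fun_eq_iff shift_kernel_def scaleR_diff_left)
  show "integrable lborel (\<lambda>x. shift_kernel t s x *\<^sub>R exp (- (complex_of_real x * z)))"
    unfolding eq using I1(1) I2(1) t z by auto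
  have "exp (- (complex_of_real (s + t) * z)) = exp (- (complex_of_real s * z)) * exp (- (complex_of_real t * z))"
    by (simp add: exp_add[symmetric] algebra_simps)
  then show "(\<integral>x. shift_kernel t s x *\<^sub>R exp (- (complex_of_real x * z)) \<partial>lborel)
       = (1 - exp (- (complex_of_real t * z))) / z * (1 - exp (- (complex_of_real s * z)))"
    unfolding eq using I1 I2 t z by (subst Bochner_Integration.integral_diff) (auto simp: field_simps)
qed

definition levy_density :: "real measure \<Rightarrow> real \<Rightarrow> real \<Rightarrow> real" where
  "levy_density \<mu> t x = (\<integral>s. shift_kernel t s x \<partial>\<mu>)"

lemma levy_density_neg: "x < 0 \<Longrightarrow> levy_density \<mu> t x = 0"
  by (simp add: levy_density_def shift_kernel_neg)

lemma levy_density_nonneg: "x \<le> t \<Longrightarrow> 0 \<le> levy_density \<mu> t x"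
  unfolding levy_density_def using shift_kernel_nonneg by (intro Bochner_Integration.integral_nonneg) auto

lemma levy_density_nonpos: "t < x \<Longrightarrow> levy_density \<mu> t x \<le> 0"
proof -
  assume "t < x"
  then have "0 \<le> (\<integral>s. - shift_kernel t s x \<partial>\<mu>)"
    using shift_kernel_nonpos by (intro Bochner_Integration.integral_nonneg) (auto simp: le_minus_iff)
  then show ?thesis
    unfolding levy_density_def by simp
qed

lemma borel_measurable_levy_density [measurable]:
  assumes L: "levy_measure \<mu>"
  shows "levy_density \<mu> t \<in> borel_measurable borel"
proof -
  interpret sigma_finite_measure \<mu>
    by (rule sigma_finite_levy_measure[OF L])
  have "(\<lambda>(x, s). shift_kernel t s x) \<in> borel_measurable (borel \<Otimes>\<^sub>M \<mu>)"
    unfolding measurable_cong_sets[OF sets_pair_measure_cong[OF refl sets_levy_measure[OF L]] refl]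
    by measurable
  then show ?thesis
    unfolding levy_density_def by (rule borel_measurable_lebesgue_integral)
qed

lemma pair_sigma_finite_levy_lborel:
  assumes "levy_measure \<mu>"
  shows "pair_sigma_finite \<mu> lborel"
  using sigma_finite_levy_measure[OF assms] by (intro pair_sigma_finite.intro sigma_finite_lborel)

lemma sets_pair_levy_lborel:
  assumes "levy_measure \<mu>"
  shows "sets (\<mu> \<Otimes>\<^sub>M lborel) = sets (borel \<Otimes>\<^sub>M borel)"
  by (rule sets_pair_measure_cong) (simp_all add: sets_levy_measure[OF assms])

context
  fixes \<mu> :: "real measure" and t :: real
  assumes L: "levy_measure \<mu>" and t: "0 < t"
begin

lemma integrable_abs_shift_kernel_pair: "integrable (\<mu> \<Otimes>\<^sub>M lborel) (\<lambda>(s, x). \<bar>shift_kernel t s x\<bar>)"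
proof (rule pair_sigma_finite.Fubini_integrable[OF pair_sigma_finite_levy_lborel[OF L]])
  note sets_P = sets_pair_levy_lborel[OF L]
  have "integrable \<mu> (\<lambda>s. 2 * min s t)"
    using integrable_levy_measure_min[OF L t] by simp
  moreover have "(\<lambda>s. \<integral>x. \<bar>shift_kernel t s x\<bar> \<partial>lborel) \<in> borel_measurable \<mu>"
    by (rule lborel.borel_measurable_lebesgue_integral) (simp add: measurable_cong_sets[OF sets_P refl])
  moreover have "AE s in \<mu>. 2 * min s t = (\<integral>x. \<bar>shift_kernel t s x\<bar> \<partial>lborel)"
    using AE_levy_measure_pos[OF L] by eventually_elim (simp add: integral_abs_shift_kernel t)
  ultimately have "integrable \<mu> (\<lambda>s. \<integral>x. \<bar>shift_kernel t s x\<bar> \<partial>lborel)"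
    by (rule integrable_cong_AE_imp)
  then show "integrable \<mu> (\<lambda>s. \<integral>x. norm ((\<lambda>(s, x). \<bar>shift_kernel t s x\<bar>) (s, x)) \<partial>lborel)"
    by simp
  show "AE s in \<mu>. integrable lborel (\<lambda>x. (\<lambda>(s, x). \<bar>shift_kernel t s x\<bar>) (s, x))"
    using AE_levy_measure_pos[OF L] by eventually_elim (simp add: integral_abs_shift_kernel t)
  show "(\<lambda>(s, x). \<bar>shift_kernel t s x\<bar>) \<in> borel_measurable (\<mu> \<Otimes>\<^sub>M lborel)"
    by (simp add: measurable_cong_sets[OF sets_P refl])
qed

lemma levy_density_integral_swap:
  fixes \<phi> :: "real \<Rightarrow> 'b::{banach, second_countable_topology}"
  assumes \<phi>: "\<phi> \<in> borel_measurable borel" and bound: "\<And>x. 0 \<le> x \<Longrightarrow> norm (\<phi> x) \<le> 1"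
  shows "integrable lborel (\<lambda>x. levy_density \<mu> t x *\<^sub>R \<phi> x)"
    and "(\<integral>x. levy_density \<mu> t x *\<^sub>R \<phi> x \<partial>lborel) = (\<integral>s. (\<integral>x. shift_kernel t s x *\<^sub>R \<phi> x \<partial>lborel) \<partial>\<mu>)"
proof -
  interpret P: pair_sigma_finite \<mu> lborel
    by (rule pair_sigma_finite_levy_lborel[OF L])
  note sets_P = sets_pair_levy_lborel[OF L] and abs_int = integrable_abs_shift_kernel_pair
  have int: "integrable (\<mu> \<Otimes>\<^sub>M lborel) (\<lambda>(s, x). shift_kernel t s x *\<^sub>R \<phi> x)"
  proof (rule Bochner_Integration.integrable_bound[OF abs_int])
    have "norm (shift_kernel t s x *\<^sub>R \<phi> x) \<le> \<bar>shift_kernel t s x\<bar>" for s x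
      using bound[of x] shift_kernel_neg[of x t s] by (cases "x < 0") (simp_all add: mult_left_le)
    then show "AE p in \<mu> \<Otimes>\<^sub>M lborel. norm ((\<lambda>(s, x). shift_kernel t s x *\<^sub>R \<phi> x) p)
        \<le> norm ((\<lambda>(s, x). \<bar>shift_kernel t s x\<bar>) p)"
      by (intro AE_I2) (auto split: prod.split)
  qed (use \<phi> in \<open>simp add: measurable_cong_sets[OF sets_P refl]\<close>)
  have AE_eq: "AE x in lborel. (\<integral>s. shift_kernel t s x *\<^sub>R \<phi> x \<partial>\<mu>) = levy_density \<mu> t x *\<^sub>R \<phi> x"
    using P.AE_integrable_snd[OF abs_int]
  proof eventually_elim
    case (elim x)
    then have "integrable \<mu> (\<lambda>s. shift_kernel t s x)"
      using integrable_abs_iff[of "\<lambda>s. shift_kernel t s x" \<mu>]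
      by (simp add: measurable_cong_sets[OF sets_levy_measure[OF L] refl])
    then show ?case
      unfolding levy_density_def by simp
  qed
  have meas: "(\<lambda>x. \<integral>s. shift_kernel t s x *\<^sub>R \<phi> x \<partial>\<mu>) \<in> borel_measurable lborel"
    "(\<lambda>x. levy_density \<mu> t x *\<^sub>R \<phi> x) \<in> borel_measurable lborel"
  proof -
    have "(\<lambda>(x, s). shift_kernel t s x *\<^sub>R \<phi> x) \<in> borel_measurable (lborel \<Otimes>\<^sub>M \<mu>)"
      using \<phi> by (simp add: measurable_cong_sets[OF sets_pair_measure_cong[OF sets_lborel sets_levy_measure[OF L]] refl])
    then show "(\<lambda>x. \<integral>s. shift_kernel t s x *\<^sub>R \<phi> x \<partial>\<mu>) \<in> borel_measurable lborel"
      by (rule P.M1.borel_measurable_lebesgue_integral)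
    show "(\<lambda>x. levy_density \<mu> t x *\<^sub>R \<phi> x) \<in> borel_measurable lborel"
      using \<phi> borel_measurable_levy_density[OF L] by simp
  qed
  show "integrable lborel (\<lambda>x. levy_density \<mu> t x *\<^sub>R \<phi> x)"
    using P.integrable_snd[OF int] integrable_cong_AE[OF meas AE_eq] by simp
  have "(\<integral>x. levy_density \<mu> t x *\<^sub>R \<phi> x \<partial>lborel) = (\<integral>x. (\<integral>s. shift_kernel t s x *\<^sub>R \<phi> x \<partial>\<mu>) \<partial>lborel)"
    using integral_cong_AE[OF meas AE_eq] by simp
  also have "\<dots> = (\<integral>s. (\<integral>x. shift_kernel t s x *\<^sub>R \<phi> x \<partial>lborel) \<partial>\<mu>)"
    using P.Fubini_integral[OF int] .
  finally show "(\<integral>x. levy_density \<mu> t x *\<^sub>R \<phi> x \<partial>lborel) = (\<integral>s. (\<integral>x. shift_kernel t s x *\<^sub>R \<phi> x \<partial>lborel) \<partial>\<mu>)" .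
qed

lemma integral_abs_levy_density:
  shows "integrable lborel (\<lambda>x. \<bar>levy_density \<mu> t x\<bar>)"
    and "(\<integral>x. \<bar>levy_density \<mu> t x\<bar> \<partial>lborel) = 2 * (\<integral>s. min s t \<partial>\<mu>)"
proof -
  \<comment> \<open>the kernel, hence its mixture, is \<open>\<ge> 0\<close> left of \<open>t\<close> and \<open>\<le> 0\<close> right of \<open>t\<close>\<close>
  define \<sigma> where "\<sigma> x = (if x \<le> t then 1 else - 1 :: real)" for x
  have \<sigma>: "\<sigma> \<in> borel_measurable borel" "norm (\<sigma> x) \<le> 1" for x
    unfolding \<sigma>_def by auto
  have kernel: "shift_kernel t s x *\<^sub>R \<sigma> x = \<bar>shift_kernel t s x\<bar>" for s x
    using shift_kernel_nonneg[of x t s] shift_kernel_nonpos[of t x s] by (simp add: \<sigma>_def)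
  have "levy_density \<mu> t x *\<^sub>R \<sigma> x = \<bar>levy_density \<mu> t x\<bar>" for x
    using levy_density_nonneg[of x t \<mu>] levy_density_nonpos[of t x \<mu>] by (simp add: \<sigma>_def)
  then have eq: "(\<lambda>x. levy_density \<mu> t x *\<^sub>R \<sigma> x) = (\<lambda>x. \<bar>levy_density \<mu> t x\<bar>)"
    by simp
  show "integrable lborel (\<lambda>x. \<bar>levy_density \<mu> t x\<bar>)"
    using levy_density_integral_swap(1)[OF \<sigma>] unfolding eq .
  have "(\<integral>x. \<bar>levy_density \<mu> t x\<bar> \<partial>lborel) = (\<integral>s. (\<integral>x. \<bar>shift_kernel t s x\<bar> \<partial>lborel) \<partial>\<mu>)"
    using levy_density_integral_swap(2)[OF \<sigma>] unfolding eq kernel .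
  also have "\<dots> = (\<integral>s. 2 * min s t \<partial>\<mu>)"
    using AE_levy_measure_pos[OF L]
    by (intro integral_cong_AE) (auto simp: measurable_cong_sets[OF sets_levy_measure[OF L] refl] integral_abs_shift_kernel t
        elim!: eventually_mono)
  finally show "(\<integral>x. \<bar>levy_density \<mu> t x\<bar> \<partial>lborel) = 2 * (\<integral>s. min s t \<partial>\<mu>)"
    by simp
qed

lemma laplace_levy_density:
  fixes z :: complex
  assumes z: "0 < Re z"
  shows "integrable lborel (\<lambda>x. levy_density \<mu> t x *\<^sub>R exp (- (complex_of_real x * z)))"
    and "(\<integral>x. levy_density \<mu> t x *\<^sub>R exp (- (complex_of_real x * z)) \<partial>lborel)
       = (1 - exp (- (complex_of_real t * z))) / z * (\<integral>s. 1 - exp (- (complex_of_real s * z)) \<partial>\<mu>)"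
proof -
  have "z \<noteq> 0"
    using z by auto
  have exp: "(\<lambda>x. exp (- (complex_of_real x * z))) \<in> borel_measurable borel"
    "0 \<le> x \<Longrightarrow> norm (exp (- (complex_of_real x * z))) \<le> 1" for x
  proof -
    show "(\<lambda>x. exp (- (complex_of_real x * z))) \<in> borel_measurable borel"
      by (intro borel_measurable_continuous_onI continuous_intros)
    show "0 \<le> x \<Longrightarrow> norm (exp (- (complex_of_real x * z))) \<le> 1"
      using z by simp
  qed
  show "integrable lborel (\<lambda>x. levy_density \<mu> t x *\<^sub>R exp (- (complex_of_real x * z)))"
    using levy_density_integral_swap(1)[OF exp] .
  have "(\<integral>x. levy_density \<mu> t x *\<^sub>R exp (- (complex_of_real x * z)) \<partial>lborel)
      = (\<integral>s. (\<integral>x. shift_kernel t s x *\<^sub>R exp (- (complex_of_real x * z)) \<partial>lborel) \<partial>\<mu>)"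
    using levy_density_integral_swap(2)[OF exp] .
  also have "\<dots> = (\<integral>s. (1 - exp (- (complex_of_real t * z))) / z * (1 - exp (- (complex_of_real s * z))) \<partial>\<mu>)"
    using AE_levy_measure_pos[OF L] laplace_shift_kernel(2)[OF _ less_imp_le[OF t], of _ z] \<open>z \<noteq> 0\<close>
    by (intro integral_cong_AE) (auto simp: measurable_cong_sets[OF sets_levy_measure[OF L] refl] elim!: eventually_mono)
  finally show "(\<integral>x. levy_density \<mu> t x *\<^sub>R exp (- (complex_of_real x * z)) \<partial>lborel)
       = (1 - exp (- (complex_of_real t * z))) / z * (\<integral>s. 1 - exp (- (complex_of_real s * z)) \<partial>\<mu>)"
    by simp
qed

end

section \<open>An explicit representing measure\<close>

text \<open>\<open>\<nu>\<^sub>t\<close> is written as \<open>repr_fun\<close> times the finite measure \<open>\<delta>\<^sub>0 + \<delta>\<^sub>t + e\<^sup>-\<^sup>x 1\<^bsub>[0,\<infinity>)\<^esub>(x) dx\<close>: the values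
  at \<open>0\<close> and \<open>t\<close> are the atoms (the absolutely continuous part does not see these two points), and
  \<open>\<rho>\<^sub>t(x) e\<^sup>x\<close> elsewhere.\<close>

definition repr_base :: "real \<Rightarrow> real measure" where
  "repr_base t = add_measure (add_measure (return borel 0) (return borel t)) (density lborel (exponential_density 1))"

lemma sets_repr_base [simp, measurable_cong]: "sets (repr_base t) = sets borel"
  by (simp add: repr_base_def)

lemma integrable_return_borel:
  fixes \<phi> :: "real \<Rightarrow> 'b::{banach, second_countable_topology}"
  assumes "\<phi> \<in> borel_measurable borel"
  shows "integrable (return borel x) \<phi>"
  using assms by (simp add: integrable_iff_bounded nn_integral_return)

lemma integral_repr_base:
  fixes \<phi> :: "real \<Rightarrow> 'b::euclidean_space"
  assumes \<phi>: "\<phi> \<in> borel_measurable borel"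
    and int: "integrable lborel (\<lambda>x. exponential_density 1 x *\<^sub>R \<phi> x)"
  shows "integrable (repr_base t) \<phi>"
    and "integral\<^sup>L (repr_base t) \<phi> = \<phi> 0 + \<phi> t + (\<integral>x. exponential_density 1 x *\<^sub>R \<phi> x \<partial>lborel)"
proof -
  have ret: "integrable (return borel x) \<phi>" "integral\<^sup>L (return borel x) \<phi> = \<phi> x" for x
    using \<phi> by (simp_all add: integrable_return_borel integral_return)
  have dens: "integrable (density lborel (exponential_density 1)) \<phi>"
    "integral\<^sup>L (density lborel (exponential_density 1)) \<phi> = (\<integral>x. exponential_density 1 x *\<^sub>R \<phi> x \<partial>lborel)"
    using \<phi> int by (simp_all add: integrable_density integral_density exponential_density_nonneg)
  have sum: "integrable (add_measure (return borel 0) (return borel t)) \<phi>"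
    "integral\<^sup>L (add_measure (return borel 0) (return borel t)) \<phi> = \<phi> 0 + \<phi> t"
    using \<phi> ret by (simp_all add: integrable_add_measure integral_add_measure)
  have sets_dens: "sets (density lborel (exponential_density 1)) = sets borel"
    by simp
  show "integrable (repr_base t) \<phi>"
    "integral\<^sup>L (repr_base t) \<phi> = \<phi> 0 + \<phi> t + (\<integral>x. exponential_density 1 x *\<^sub>R \<phi> x \<partial>lborel)"
    unfolding repr_base_def
    using integrable_add_measure[OF sets_add_measure sets_dens \<phi> sum(1) dens(1)]
      integral_add_measure[OF sets_add_measure sets_dens \<phi> sum(1) dens(1)] sum(2) dens(2)
    by simp_all
qed

lemma finite_measure_repr_base: "finite_measure (repr_base t)"
proof -
  have "finite_measure (return borel x)" for x :: real
    using prob_space_return[of x borel] by (simp add: prob_space_def)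
  moreover have "finite_measure (density lborel (exponential_density 1))"
    using prob_space_exponential_density[of 1] by (simp add: prob_space_def)
  ultimately show ?thesis
    unfolding repr_base_def by (intro finite_measure_add_measure) simp_all
qed

lemma emeasure_repr_base_neg:
  assumes "0 \<le> t"
  shows "emeasure (repr_base t) {..<0} = 0"
proof -
  have "(\<lambda>x. ennreal (exponential_density 1 x) * indicator {..<0} x) = (\<lambda>_. 0)"
    by (simp add: fun_eq_iff exponential_density_def)
  then have "emeasure (density lborel (exponential_density 1)) {..<0} = 0"
    by (subst emeasure_density) simp_all
  then show ?thesis
    using assms by (simp add: repr_base_def emeasure_add_measure)
qed

definition repr_density :: "real \<Rightarrow> real \<Rightarrow> real measure \<Rightarrow> real \<Rightarrow> real" where
  "repr_density a t \<mu> x = (a * indicator {0..t} x + levy_density \<mu> t x) / t"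

definition repr_fun :: "real \<Rightarrow> real \<Rightarrow> real measure \<Rightarrow> real \<Rightarrow> real \<Rightarrow> complex" where
  "repr_fun a b \<mu> t x = (if x = 0 then b / t else if x = t then - b / t else repr_density a t \<mu> x * exp x)"

lemma exponential_density_repr_fun:
  assumes "x \<noteq> 0" "x \<noteq> t"
  shows "exponential_density 1 x *\<^sub>R repr_fun a b \<mu> t x = complex_of_real (repr_density a t \<mu> x)"
proof -
  have "exponential_density 1 x *\<^sub>R repr_fun a b \<mu> t x
      = complex_of_real (exponential_density 1 x * (repr_density a t \<mu> x * exp x))"
    using assms by (simp add: repr_fun_def scaleR_conv_of_real)
  also have "exponential_density 1 x * (repr_density a t \<mu> x * exp x) = repr_density a t \<mu> x"
    by (cases "x < 0") (simp_all add: exponential_density_def repr_density_def levy_density_neg flip: exp_add)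
  finally show ?thesis .
qed

context
  fixes \<mu> :: "real measure" and a b t :: real
  assumes L: "levy_measure \<mu>" and a: "0 \<le> a" and b: "0 \<le> b" and t: "0 < t"
begin

lemma borel_measurable_repr_density [measurable]: "repr_density a t \<mu> \<in> borel_measurable borel"
  unfolding repr_density_def using borel_measurable_levy_density[OF L] by measurable

lemma borel_measurable_repr_fun [measurable]: "repr_fun a b \<mu> t \<in> borel_measurable borel"
  unfolding repr_fun_def by measurable

lemma integral_abs_repr_density:
  shows "integrable lborel (\<lambda>x. \<bar>repr_density a t \<mu> x\<bar>)"
    and "(\<integral>x. \<bar>repr_density a t \<mu> x\<bar> \<partial>lborel) = a + 2 / t * (\<integral>s. min s t \<partial>\<mu>)"
proof -
  have abs_eq: "\<bar>repr_density a t \<mu> x\<bar> = (a / t) * indicator {0..t} x + \<bar>levy_density \<mu> t x\<bar> / t" for x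
  proof (cases "x \<in> {0..t}")
    case True
    then show ?thesis
      using levy_density_nonneg[of x t \<mu>] a t by (simp add: repr_density_def add_divide_distrib)
  qed (use t in \<open>auto simp: repr_density_def abs_div\<close>)
  have int: "integrable lborel (\<lambda>x. (a / t) * indicator {0..t} x :: real)"
    using t by (intro integrable_mult_right integrable_real_indicator) auto
  note lev = integral_abs_levy_density[OF L t]
  show "integrable lborel (\<lambda>x. \<bar>repr_density a t \<mu> x\<bar>)"
    unfolding abs_eq using int lev(1) by simp
  show "(\<integral>x. \<bar>repr_density a t \<mu> x\<bar> \<partial>lborel) = a + 2 / t * (\<integral>s. min s t \<partial>\<mu>)"
    unfolding abs_eq using int lev t by simp
qed

lemma laplace_repr_density:
  fixes z :: complex
  assumes z: "0 < Re z"
  shows "integrable lborel (\<lambda>x. repr_density a t \<mu> x *\<^sub>R exp (- (complex_of_real x * z)))"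
    and "(\<integral>x. repr_density a t \<mu> x *\<^sub>R exp (- (complex_of_real x * z)) \<partial>lborel)
      = (1 - exp (- (complex_of_real t * z))) / (complex_of_real t * z) * (a + (\<integral>s. 1 - exp (- (complex_of_real s * z)) \<partial>\<mu>))"
proof -
  have "z \<noteq> 0"
    using z by auto
  note I = laplace_indicator_Icc[OF less_imp_le[OF t] this] and K = laplace_levy_density[OF L t z]
  have eq: "(\<lambda>x. repr_density a t \<mu> x *\<^sub>R exp (- (complex_of_real x * z))) =
    (\<lambda>x. (a / t) *\<^sub>R (indicator {0..t} x *\<^sub>R exp (- (complex_of_real x * z)))
       + (1 / t) *\<^sub>R (levy_density \<mu> t x *\<^sub>R exp (- (complex_of_real x * z))))"
    by (auto simp: fun_eq_iff repr_density_def add_divide_distrib scaleR_add_left)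
  show "integrable lborel (\<lambda>x. repr_density a t \<mu> x *\<^sub>R exp (- (complex_of_real x * z)))"
    unfolding eq using I(1) K(1) by (intro Bochner_Integration.integrable_add integrable_scaleR_right)
  have "(\<integral>x. repr_density a t \<mu> x *\<^sub>R exp (- (complex_of_real x * z)) \<partial>lborel)
      = (a / t) *\<^sub>R ((1 - exp (- (complex_of_real t * z))) / z)
      + (1 / t) *\<^sub>R ((1 - exp (- (complex_of_real t * z))) / z * (\<integral>s. 1 - exp (- (complex_of_real s * z)) \<partial>\<mu>))"
    unfolding eq Bochner_Integration.integral_add[OF integrable_scaleR_right[OF I(1)] integrable_scaleR_right[OF K(1)]]
      integral_scaleR_right I(2) K(2) by simp
  also have "\<dots> = (1 - exp (- (complex_of_real t * z))) / (complex_of_real t * z) * (a + (\<integral>s. 1 - exp (- (complex_of_real s * z)) \<partial>\<mu>))"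
    using \<open>z \<noteq> 0\<close> t by (simp add: scaleR_conv_of_real field_simps)
  finally show "(\<integral>x. repr_density a t \<mu> x *\<^sub>R exp (- (complex_of_real x * z)) \<partial>lborel)
      = (1 - exp (- (complex_of_real t * z))) / (complex_of_real t * z) * (a + (\<integral>s. 1 - exp (- (complex_of_real s * z)) \<partial>\<mu>))" .
qed

lemma exponential_density_times_repr_fun:
  "AE x in lborel. repr_density a t \<mu> x *\<^sub>R h x = exponential_density 1 x *\<^sub>R (h x * repr_fun a b \<mu> t x)"
  "AE x in lborel. \<bar>repr_density a t \<mu> x\<bar> = exponential_density 1 x *\<^sub>R norm (repr_fun a b \<mu> t x)"
proof -
  have *: "AE x in lborel. x \<noteq> 0 \<and> x \<noteq> t"
    using AE_lborel_singleton[of 0] AE_lborel_singleton[of t] by eventually_elim auto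
  then show "AE x in lborel. repr_density a t \<mu> x *\<^sub>R h x = exponential_density 1 x *\<^sub>R (h x * repr_fun a b \<mu> t x)"
  proof eventually_elim
    case (elim x)
    have "exponential_density 1 x *\<^sub>R (h x * repr_fun a b \<mu> t x) = h x * (exponential_density 1 x *\<^sub>R repr_fun a b \<mu> t x)"
      by (rule mult_scaleR_right[symmetric])
    also have "\<dots> = repr_density a t \<mu> x *\<^sub>R h x"
      unfolding exponential_density_repr_fun[OF conjunct1[OF elim] conjunct2[OF elim]] by (simp add: scaleR_conv_of_real)
    finally show ?case ..
  qed
  show "AE x in lborel. \<bar>repr_density a t \<mu> x\<bar> = exponential_density 1 x *\<^sub>R norm (repr_fun a b \<mu> t x)"
    using *
  proof eventually_elim
    case (elim x)
    have "exponential_density 1 x *\<^sub>R norm (repr_fun a b \<mu> t x) = norm (exponential_density 1 x *\<^sub>R repr_fun a b \<mu> t x)"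
      using exponential_density_nonneg[of 1 x] by simp
    also have "\<dots> = \<bar>repr_density a t \<mu> x\<bar>"
      unfolding exponential_density_repr_fun[OF conjunct1[OF elim] conjunct2[OF elim]] by simp
    finally show ?case ..
  qed
qed

lemma laplace_repr_repr_fun: "laplace_repr (repr_base t) (repr_fun a b \<mu> t) (\<lambda>z. Cfun t z * bernstein a b \<mu> z)"
proof -
  have exp_meas [measurable]: "(\<lambda>x. exp (- (complex_of_real x * z))) \<in> borel_measurable borel" for z
    by (intro borel_measurable_continuous_onI continuous_intros)
  have "integrable lborel (\<lambda>x. complex_of_real (repr_density a t \<mu> x))"
    using integral_abs_repr_density(1) integrable_abs_iff[of "repr_density a t \<mu>" lborel] by simp
  moreover have "(\<lambda>x. exponential_density 1 x *\<^sub>R repr_fun a b \<mu> t x) \<in> borel_measurable lborel"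
    by measurable
  moreover have "AE x in lborel. complex_of_real (repr_density a t \<mu> x) = exponential_density 1 x *\<^sub>R repr_fun a b \<mu> t x"
    using exponential_density_times_repr_fun(1)[of "\<lambda>_. 1"] by (simp add: scaleR_conv_of_real)
  ultimately have int: "integrable (repr_base t) (repr_fun a b \<mu> t)"
    by (rule integral_repr_base(1)[OF borel_measurable_repr_fun integrable_cong_AE_imp])
  have "Cfun t z * bernstein a b \<mu> z = (\<integral>s. exp (- (complex_of_real s * z)) * repr_fun a b \<mu> t s \<partial>repr_base t)"
    if z: "0 < Re z" for z
  proof -
    let ?E = "\<lambda>x. exp (- (complex_of_real x * z))" and ?J = "\<integral>s. 1 - exp (- (complex_of_real s * z)) \<partial>\<mu>"
    have AE_eq: "AE x in lborel. repr_density a t \<mu> x *\<^sub>R ?E x = exponential_density 1 x *\<^sub>R (?E x * repr_fun a b \<mu> t x)"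
      by (rule exponential_density_times_repr_fun(1))
    have meas: "(\<lambda>x. exponential_density 1 x *\<^sub>R (?E x * repr_fun a b \<mu> t x)) \<in> borel_measurable lborel"
      by measurable
    have "integrable lborel (\<lambda>x. exponential_density 1 x *\<^sub>R (?E x * repr_fun a b \<mu> t x))"
      by (rule integrable_cong_AE_imp[OF laplace_repr_density(1)[OF z] meas AE_eq])
    then have "(\<integral>s. ?E s * repr_fun a b \<mu> t s \<partial>repr_base t)
        = ?E 0 * repr_fun a b \<mu> t 0 + ?E t * repr_fun a b \<mu> t t
          + (\<integral>x. exponential_density 1 x *\<^sub>R (?E x * repr_fun a b \<mu> t x) \<partial>lborel)"
      by (rule integral_repr_base(2)[rotated]) measurable
    also have "(\<integral>x. exponential_density 1 x *\<^sub>R (?E x * repr_fun a b \<mu> t x) \<partial>lborel)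
        = (\<integral>x. repr_density a t \<mu> x *\<^sub>R ?E x \<partial>lborel)"
    proof -
      have "(\<lambda>x. repr_density a t \<mu> x *\<^sub>R ?E x) \<in> borel_measurable lborel"
        by measurable
      from integral_cong_AE[OF this meas AE_eq] show ?thesis ..
    qed
    also have "?E 0 * repr_fun a b \<mu> t 0 + ?E t * repr_fun a b \<mu> t t + (\<integral>x. repr_density a t \<mu> x *\<^sub>R ?E x \<partial>lborel)
        = b / t * (1 - ?E t) + (1 - ?E t) / (complex_of_real t * z) * (a + ?J)"
      unfolding laplace_repr_density(2)[OF z] using t by (simp add: repr_fun_def algebra_simps)
    also have "\<dots> = Cfun t z * bernstein a b \<mu> z"
    proof -
      have "z \<noteq> 0" "complex_of_real t \<noteq> 0"
        using z t by auto
      then show ?thesis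
        unfolding Cfun_def bernstein_def by (simp add: field_simps)
    qed
    finally show ?thesis ..
  qed
  then show ?thesis
    unfolding laplace_repr_def using finite_measure_repr_base emeasure_repr_base_neg t int by simp
qed

lemma total_variation_repr_fun: "total_variation (repr_base t) (repr_fun a b \<mu> t) = 2 * rate a b \<mu> t"
proof -
  have AE_eq: "AE x in lborel. \<bar>repr_density a t \<mu> x\<bar> = exponential_density 1 x *\<^sub>R norm (repr_fun a b \<mu> t x)"
    by (rule exponential_density_times_repr_fun(2))
  have meas: "(\<lambda>x. exponential_density 1 x *\<^sub>R norm (repr_fun a b \<mu> t x)) \<in> borel_measurable lborel"
    by measurable
  have cont: "(\<integral>x. exponential_density 1 x *\<^sub>R norm (repr_fun a b \<mu> t x) \<partial>lborel)
      = a + 2 / t * (\<integral>s. min s t \<partial>\<mu>)"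
    using integral_cong_AE[OF _ meas AE_eq] integral_abs_repr_density(2) by simp
  have "integrable lborel (\<lambda>x. exponential_density 1 x *\<^sub>R norm (repr_fun a b \<mu> t x))"
    by (rule integrable_cong_AE_imp[OF integral_abs_repr_density(1) meas AE_eq])
  then have "total_variation (repr_base t) (repr_fun a b \<mu> t)
      = norm (repr_fun a b \<mu> t 0) + norm (repr_fun a b \<mu> t t) + (a + 2 / t * (\<integral>s. min s t \<partial>\<mu>))"
    unfolding total_variation_def cont[symmetric] by (rule integral_repr_base(2)[rotated]) measurable
  also have "\<dots> = 2 * rate a b \<mu> t"
  proof -
    have "(\<lambda>s. min (s / t) 1) = (\<lambda>s. min s t / t)"
      using t by (simp add: fun_eq_iff min_divide_distrib_right)
    then show ?thesis
      unfolding rate_def using b t by (simp add: repr_fun_def norm_divide field_simps)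
  qed
  finally show ?thesis .
qed

end


theorem theorem3p1:
  fixes a b t :: real and \<mu> :: "real measure"
  assumes "0 \<le> a" and "0 \<le> b" and "levy_measure \<mu>" and "0 < t"
  shows "(\<exists>M f. laplace_repr M f (\<lambda>z. Cfun t z * bernstein a b \<mu> z))
    \<and> (\<forall>M f. laplace_repr M f (\<lambda>z. Cfun t z * bernstein a b \<mu> z)
          \<longrightarrow> total_variation M f = 2 * rate a b \<mu> t)"
proof -
  have repr: "laplace_repr (repr_base t) (repr_fun a b \<mu> t) (\<lambda>z. Cfun t z * bernstein a b \<mu> z)"
    using laplace_repr_repr_fun[OF assms(3,1,2,4)] .
  moreover have "total_variation M f = 2 * rate a b \<mu> t"
    if "laplace_repr M f (\<lambda>z. Cfun t z * bernstein a b \<mu> z)" for M f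
    using total_variation_unique[OF that repr] total_variation_repr_fun[OF assms(3,1,2,4)] by simp
  ultimately show ?thesis
    by blast
qed

end
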